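(* Let $N=\langle S,T,F,I,R,\mathsf m,\ell\rangle$ be a single execution net. Let $\mathit{Confl}(N)=\{\{t,t'\}\mid t,t'\in T,\ \forall X\in \mathrm{St}(N).\ \{t,t'\}\not\subseteq \lfloor X\rfloor\}$, let $S^{\#}=\{s_A\mid A\in \mathit{Confl}(N)\}$ be a set of fresh places (disjoint from $S\cup T$), and let $$N^{\#}=\langle S\cup S^{\#},\ T,\ F\cup\{(s_A,t)\mid s_A\in S^{\#},\ t\in A\},\ I,\ R,\ \mathsf m + S^{\#},\ \ell\rangle ,$$ i.e. every new place $s_A$ is initially marked with one token, has no incoming arcs, and is in the preset of each transition of $A$. Then $N^{\#}$ is conflict saturated and $N\equiv N^{\#}$.
   Context: A (labelled contextual) Petri net is a tuple $N=\langle S,T,F,I,R,\mathsf m,\ell\rangle$ where $S$ (places) and $T$ (transitions) are disjoint sets, $F\subseteq (S\times T)\cup(T\times S)$ is the flow relation, $I\subseteq S\times T$ are inhibitor arcs, $R\subseteq S\times T$ are read arcs, $\mathsf m$ is a multiset over $S$ (initial marking), and $\ell:T\to L$ is a total labelling function into a set $L$ of labels. For $x\in S\cup T$: ${}^\bullet x=\{y\mid (y,x)\in F\}$, $x^\bullet=\{y\mid (x,y)\in F\}$; for $t\in T$: ${}^\circ t=\{s\mid (s,t)\in I\}$ and $\underline{t}=\{s\mid (s,t)\in R\}$. Every transition has nonempty preset. A transition $t$ is enabled at a marking $m$ if ${}^\bullet t+\underline t\subseteq m$ and $m(s)=0$ for every $s\in {}^\circ t$; its firing yields $m'=m-{}^\bullet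 t+t^\bullet$. A (finite) firing sequence is $\mathsf m=m_0[t_1\rangle m_1[t_2\rangle\cdots[t_n\rangle m_n$ where each $t_{i+1}$ is enabled at $m_i$ and its firing yields $m_{i+1}$. A state of $N$ is the multiset $t_1+\dots+t_n$ of the transitions fired in such a finite firing sequence starting at the initial marking; $\mathrm{St}(N)$ is the set of states. For a multiset $X$, $\lfloor X\rfloor$ is its support (the set of elements with nonzero multiplicity). $N$ is a single execution net if every state is a set ($X=\lfloor X\rfloor$). $N$ is conflict saturated if for all $t,t'\in T$ such that $\{t,t'\}\not\subseteq\lfloor X\rfloor$ for every $X\in\mathrm{St}(N)$, one has ${}^\bullet t\cap{}^\bullet t'\neq\emptyset$. Two nets $N,N'$ are equivalent, $N\equiv N'$, if they have the same set of transitions, the same labelling and $\mathrm{St}(N)=\mathrm{St}(N')$. *)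

theory Defs
  imports Main "HOL-Library.Multiset"
begin

text \<open>Places have type 'p, transitions type 't
  (so S and T are disjoint by construction). The flow relation F \<subseteq> (S\<times>T)\<union>(T\<times>S)
  is split into its two parts: pre \<subseteq> S\<times>T and post \<subseteq> T\<times>S.\<close>

record ('p, 't, 'l) pnet =
  places :: "'p set"
  trans  :: "'t set"
  pre    :: "('p \<times> 't) set"
  post   :: "('t \<times> 'p) set"
  inhib  :: "('p \<times> 't) set"
  readarc :: "('p \<times> 't) set"
  m0     :: "'p \<Rightarrow> nat"
  lab    :: "'t \<Rightarrow> 'l"

definition preset :: "('p,'t,'l) pnet \<Rightarrow> 't \<Rightarrow> 'p set" where
  "preset N t = {s. (s,t) \<in> pre N}"

definition postset :: "('p,'t,'l) pnet \<Rightarrow> 't \<Rightarrow> 'p set" where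
  "postset N t = {s. (t,s) \<in> post N}"

definition inhset :: "('p,'t,'l) pnet \<Rightarrow> 't \<Rightarrow> 'p set" where
  "inhset N t = {s. (s,t) \<in> inhib N}"

definition readset :: "('p,'t,'l) pnet \<Rightarrow> 't \<Rightarrow> 'p set" where
  "readset N t = {s. (s,t) \<in> readarc N}"

definition ind :: "'a set \<Rightarrow> 'a \<Rightarrow> nat" where
  "ind A x = (if x \<in> A then 1 else 0)"

definition wf_net :: "('p,'t,'l) pnet \<Rightarrow> bool" where
  "wf_net N \<longleftrightarrow>
     pre N \<subseteq> places N \<times> trans N \<and>
     post N \<subseteq> trans N \<times> places N \<and>
     inhib N \<subseteq> places N \<times> trans N \<and>
     readarc N \<subseteq> places N \<times> trans N \<and>
     (\<forall>s. m0 N s > 0 \<longrightarrow> s \<in> places N) \<and>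
     (\<forall>t\<in>trans N. preset N t \<noteq> {})"

definition enabled :: "('p,'t,'l) pnet \<Rightarrow> ('p \<Rightarrow> nat) \<Rightarrow> 't \<Rightarrow> bool" where
  "enabled N m t \<longleftrightarrow> t \<in> trans N \<and>
     (\<forall>s. ind (preset N t) s + ind (readset N t) s \<le> m s) \<and>
     (\<forall>s\<in>inhset N t. m s = 0)"

definition fire :: "('p,'t,'l) pnet \<Rightarrow> ('p \<Rightarrow> nat) \<Rightarrow> 't \<Rightarrow> ('p \<Rightarrow> nat)" where
  "fire N m t = (\<lambda>s. m s - ind (preset N t) s + ind (postset N t) s)"

inductive reach :: "('p,'t,'l) pnet \<Rightarrow> ('p \<Rightarrow> nat) \<Rightarrow> 't multiset \<Rightarrow> bool"
  for N where
  reach_init: "reach N (m0 N) {#}"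
| reach_step: "reach N m X \<Longrightarrow> enabled N m t \<Longrightarrow> reach N (fire N m t) (add_mset t X)"

definition states :: "('p,'t,'l) pnet \<Rightarrow> 't multiset set" where
  "states N = {X. \<exists>m. reach N m X}"

definition single_execution :: "('p,'t,'l) pnet \<Rightarrow> bool" where
  "single_execution N \<longleftrightarrow> (\<forall>X\<in>states N. X = mset_set (set_mset X))"

definition conflict_saturated :: "('p,'t,'l) pnet \<Rightarrow> bool" where
  "conflict_saturated N \<longleftrightarrow>
     (\<forall>t\<in>trans N. \<forall>t'\<in>trans N.
        (\<forall>X\<in>states N. \<not> {t,t'} \<subseteq> set_mset X) \<longrightarrow> preset N t \<inter> preset N t' \<noteq> {})"

definition net_equiv :: "('p,'t,'l) pnet \<Rightarrow> ('q,'t,'l) pnet \<Rightarrow> bool" where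
  "net_equiv N N' \<longleftrightarrow> trans N = trans N' \<and> (\<forall>t\<in>trans N. lab N t = lab N' t)
     \<and> states N = states N'"

definition Confl :: "('p,'t,'l) pnet \<Rightarrow> 't set set" where
  "Confl N = {{t,t'} | t t'. t \<in> trans N \<and> t' \<in> trans N \<and>
                 (\<forall>X\<in>states N. \<not> {t,t'} \<subseteq> set_mset X)}"

text \<open>The saturated net N#: old places Inl s, fresh places Inr A = s_A for A \<in> Confl N.\<close>
definition saturate :: "('p,'t,'l) pnet \<Rightarrow> ('p + 't set, 't, 'l) pnet" where
  "saturate N = \<lparr>
     places = Inl ` places N \<union> Inr ` Confl N,
     trans = trans N,
     pre = {(Inl s, t) | s t. (s,t) \<in> pre N} \<union> {(Inr A, t) | A t. A \<in> Confl N \<and> t \<in> A},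
     post = {(t, Inl s) | s t. (t,s) \<in> post N},
     inhib = {(Inl s, t) | s t. (s,t) \<in> inhib N},
     readarc = {(Inl s, t) | s t. (s,t) \<in> readarc N},
     m0 = (\<lambda>p. case p of Inl s \<Rightarrow> m0 N s | Inr A \<Rightarrow> (if A \<in> Confl N then 1 else 0)),
     lab = lab N \<rparr>"

end

theory Submission
  imports Defs
begin

(*
  A firing sequence of N#, restricted to the old places, is a firing sequence of N, since N#
  only adds preconditions. Conversely, a firing sequence of N with transition multiset X is one
  of N# when the fresh place s_A carries a token exactly while no transition of A has fired:
  a transition t never finds s_A (with t in A) empty, because A is a conflict, t fires at most
  once in a single execution net, and so the other member of A cannot have fired before t.
  Hence both nets have the same states, and any two transitions that never occur together in a
  state form a conflict A whose place s_A lies in both presets.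
*)

lemma preset_saturate:
  "preset (saturate N) t = Inl ` preset N t \<union> Inr ` {A \<in> Confl N. t \<in> A}"
  by (auto simp: preset_def saturate_def)

lemma postset_saturate: "postset (saturate N) t = Inl ` postset N t"
  by (auto simp: postset_def saturate_def)

lemma inhset_saturate: "inhset (saturate N) t = Inl ` inhset N t"
  by (auto simp: inhset_def saturate_def)

lemma readset_saturate: "readset (saturate N) t = Inl ` readset N t"
  by (auto simp: readset_def saturate_def)

lemma ind_Inl_image [simp]:
  "ind (Inl ` A \<union> Inr ` B) (Inl s) = ind A s"
  "ind (Inl ` A) (Inl s) = ind A s"
  by (auto simp: ind_def)

lemma ind_Inr_image [simp]:
  "ind (Inl ` A \<union> Inr ` B) (Inr b) = ind B b"
  "ind (Inl ` A) (Inr b) = 0"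
  by (auto simp: ind_def)

lemma trans_saturate [simp]: "trans (saturate N) = trans N"
  by (simp add: saturate_def)

lemma lab_saturate [simp]: "lab (saturate N) = lab N"
  by (simp add: saturate_def)

lemma enabled_saturate_imp_enabled:
  assumes "enabled (saturate N) m t"
  shows "enabled N (m \<circ> Inl) t"
  unfolding enabled_def
proof (intro conjI allI ballI)
  show "t \<in> trans N"
    using assms by (simp add: enabled_def)
  fix s
  have "ind (preset (saturate N) t) (Inl s) + ind (readset (saturate N) t) (Inl s) \<le> m (Inl s)"
    using assms unfolding enabled_def by blast
  then show "ind (preset N t) s + ind (readset N t) s \<le> (m \<circ> Inl) s"
    by (simp add: preset_saturate readset_saturate)
  show "(m \<circ> Inl) s = 0" if "s \<in> inhset N t"
    using assms that unfolding enabled_def inhset_saturate by simp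
qed

lemma fire_saturate_Inl: "fire (saturate N) m t \<circ> Inl = fire N (m \<circ> Inl) t"
  by (auto simp: fire_def preset_saturate postset_saturate)

lemma reach_saturate_imp_reach:
  "reach (saturate N) m X \<Longrightarrow> reach N (m \<circ> Inl) X"
proof (induction rule: reach.induct)
  case reach_init
  have "m0 (saturate N) \<circ> Inl = m0 N"
    by (auto simp: saturate_def)
  with reach.reach_init show ?case
    by simp
next
  case (reach_step m X t)
  have "reach N (fire N (m \<circ> Inl) t) (add_mset t X)"
    by (rule reach.reach_step[OF reach_step.IH enabled_saturate_imp_enabled[OF reach_step.hyps(2)]])
  then show ?case
    by (simp add: fire_saturate_Inl)
qed

definition saturated_marking ::
    "('p,'t,'l) pnet \<Rightarrow> ('p \<Rightarrow> nat) \<Rightarrow> 't multiset \<Rightarrow> 'p + 't set \<Rightarrow> nat" where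
  "saturated_marking N m X = (\<lambda>p. case p of
      Inl s \<Rightarrow> m s
    | Inr A \<Rightarrow> (if A \<in> Confl N \<and> A \<inter> set_mset X = {} then 1 else 0))"

lemma saturated_marking_init: "saturated_marking N (m0 N) {#} = m0 (saturate N)"
  by (auto simp: saturated_marking_def saturate_def split: sum.splits)

lemma single_execution_fires_once:
  assumes "single_execution N" and "add_mset t X \<in> states N"
  shows "t \<notin># X"
proof -
  have "add_mset t X = mset_set (set_mset (add_mset t X))"
    using assms by (auto simp: single_execution_def)
  then have "count (add_mset t X) t = 1"
    by (metis count_mset_set(1) finite_set_mset union_single_eq_member)
  then show ?thesis
    by (simp add: count_eq_zero_iff)
qed

lemma Confl_disjoint_before_member:
  assumes "A \<in> Confl N" "t \<in> A" "add_mset t X \<in> states N" "t \<notin># X"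
  shows "A \<inter> set_mset X = {}"
proof (rule ccontr)
  assume "A \<inter> set_mset X \<noteq> {}"
  then obtain u where u: "u \<in> A" "u \<in># X"
    by auto
  from assms(1) obtain a b where A: "A = {a, b}"
    and never: "\<forall>Y\<in>states N. \<not> {a, b} \<subseteq> set_mset Y"
    by (auto simp: Confl_def)
  have "{a, b} \<subseteq> set_mset (add_mset t X)"
    using A u assms(2,4) by auto
  then show False
    using never assms(3) by blast
qed

lemma enabled_imp_enabled_saturate:
  assumes "enabled N m t"
    and free: "\<And>A. A \<in> Confl N \<Longrightarrow> t \<in> A \<Longrightarrow> A \<inter> set_mset X = {}"
  shows "enabled (saturate N) (saturated_marking N m X) t"
  unfolding enabled_def
proof (intro conjI allI ballI)
  show "t \<in> trans (saturate N)"
    using assms(1) by (simp add: enabled_def)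
  show "ind (preset (saturate N) t) p + ind (readset (saturate N) t) p
          \<le> saturated_marking N m X p" for p
  proof (cases p)
    case (Inl s)
    then show ?thesis
      using assms(1) by (simp add: enabled_def preset_saturate readset_saturate saturated_marking_def)
  next
    case (Inr A)
    then show ?thesis
      using free by (auto simp: preset_saturate readset_saturate saturated_marking_def ind_def)
  qed
  show "saturated_marking N m X p = 0" if "p \<in> inhset (saturate N) t" for p
    using assms(1) that unfolding enabled_def inhset_saturate
    by (auto simp: saturated_marking_def)
qed

lemma fire_saturated_marking:
  "fire (saturate N) (saturated_marking N m X) t = saturated_marking N (fire N m t) (add_mset t X)"
proof
  fix p
  show "fire (saturate N) (saturated_marking N m X) t p
          = saturated_marking N (fire N m t) (add_mset t X) p"
    by (cases p) (auto simp: fire_def preset_saturate postset_saturate saturated_marking_def ind_def)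
qed

lemma reach_imp_reach_saturate:
  assumes "single_execution N"
  shows "reach N m X \<Longrightarrow> reach (saturate N) (saturated_marking N m X) X"
proof (induction rule: reach.induct)
  case reach_init
  show ?case
    unfolding saturated_marking_init by (rule reach.reach_init)
next
  case (reach_step m X t)
  have state: "add_mset t X \<in> states N"
    using reach.reach_step[OF reach_step.hyps] by (auto simp: states_def)
  have fresh: "t \<notin># X"
    by (rule single_execution_fires_once[OF assms state])
  have "enabled (saturate N) (saturated_marking N m X) t"
    by (rule enabled_imp_enabled_saturate[OF reach_step.hyps(2)
          Confl_disjoint_before_member[OF _ _ state fresh]])
  then have "reach (saturate N) (fire (saturate N) (saturated_marking N m X) t) (add_mset t X)"
    by (rule reach.reach_step[OF reach_step.IH])
  then show ?case
    by (simp only: fire_saturated_marking)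
qed

lemma states_saturate:
  assumes "single_execution N"
  shows "states (saturate N) = states N"
  using reach_saturate_imp_reach reach_imp_reach_saturate[OF assms]
  unfolding states_def by blast

lemma conflict_saturated_saturate:
  assumes "states (saturate N) = states N"
  shows "conflict_saturated (saturate N)"
  unfolding conflict_saturated_def
proof (intro ballI impI)
  fix t t'
  assume "t \<in> trans (saturate N)" "t' \<in> trans (saturate N)"
    and "\<forall>X\<in>states (saturate N). \<not> {t, t'} \<subseteq> set_mset X"
  then have "{t, t'} \<in> Confl N"
    using assms by (auto simp: Confl_def)
  then have "Inr {t, t'} \<in> preset (saturate N) t \<inter> preset (saturate N) t'"
    by (auto simp: preset_saturate)
  then show "preset (saturate N) t \<inter> preset (saturate N) t' \<noteq> {}"
    by blast
qed

theorem mainTheorem1: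
  fixes N :: "('p, 't, 'l) pnet"
  assumes "wf_net N"
    and "single_execution N"
  shows "conflict_saturated (saturate N) \<and> net_equiv N (saturate N)"
proof
  have states: "states (saturate N) = states N"
    using assms(2) by (rule states_saturate)
  then show "conflict_saturated (saturate N)"
    by (rule conflict_saturated_saturate)
  show "net_equiv N (saturate N)"
    using states by (simp add: net_equiv_def)
qed

end
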